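(* For every DBI normal formula $\varphi$, the pointed action model $(\mathcal{U}_\varphi,0)$ is idempotent: for every pointed Kripke model $(\mathcal{M},w)$, the pointed updates $\bigl(\mathcal{M}\odot\mathcal{U}_\varphi,(w,0)\bigr)$ and $\bigl((\mathcal{M}\odot\mathcal{U}_\varphi)\odot\mathcal{U}_\varphi,((w,0),0)\bigr)$ are both defined and are isomorphic as pointed Kripke models.
   Context: Agents $\mathcal{A}=\{1,\dots,n\}$, $n>1$; language $\mathcal{L}$: $\varphi ::= p \mid \neg\varphi \mid (\varphi\wedge\varphi)\mid B_i\varphi$, $\top$ the usual tautology. Kripke model $\mathcal{M}=\langle S,R,V\rangle$ (nonempty $S$, $R_i\subseteq S\times S$, $V:\mathit{Prop}\to 2^S$), standard truth. Action model $\mathcal{U}=\langle E,Q,\mathsf{pre}\rangle$ (nonempty $E$, $Q_i\subseteq E\times E$, $\mathsf{pre}:E\to\mathcal{L}$). Pointed update of $(\mathcal{M},w)$ with $(\mathcal{U},\alpha)$, defined iff $\mathcal{M},w\vDash\mathsf{pre}(\alpha)$: with $T=\{(x,\beta)\in S\times E\mid\mathcal{M},x\vDash\mathsf{pre}(\beta)\}$, $\mathcal{M}\odot\mathcal{U}=\langle S^{\mathcal U},R^{\mathcal U},V^{\mathcal U}\rangle$ where $S^{\mathcal U}$ is the smallest subset of $T$ containing $(w,\alpha)$ closed under: $(x,\beta)\in S^{\mathcal U}$, $(u,\gamma)\in T$, $xR_iu$, $\beta Q_i\gamma$ imply $(u,\gamma)\in S^{\mathcal U}$; $R^{\mathcal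 U}_i$ relates $(x,\beta),(u,\gamma)\in S^{\mathcal U}$ iff $xR_iu$ and $\beta Q_i\gamma$; $V^{\mathcal U}(p)=\{(x,\beta)\in S^{\mathcal U}\mid x\in V(p)\}$; the result is the pointed model $(\mathcal{M}\odot\mathcal{U},(w,\alpha))$. Two pointed Kripke models are isomorphic if there is a bijection of worlds preserving the relations, the valuation and the point. Target agents: $\mathsf{ta}(p)=\varnothing$, $\mathsf{ta}(\neg\phi)=\mathsf{ta}(\phi)$, $\mathsf{ta}(\phi\wedge\psi)=\mathsf{ta}(\phi)\cup\mathsf{ta}(\psi)$, $\mathsf{ta}(B_i\phi)=\{i\}$. DBI formulas: $\varphi ::= B_i\xi \mid B_i(\xi\wedge\varphi)\mid(\varphi\wedge\varphi)\mid B_i\varphi$, $\xi$ purely propositional. DBI normal: $B_i\xi$ always; $B_i\varphi$, $B_i(\xi\wedge\varphi)$ iff $\varphi$ DBI normal and $i\notin\mathsf{ta}(\varphi)$; $\varphi\wedge\psi$ iff both DBI normal and $\mathsf{ta}(\varphi)\cap\mathsf{ta}(\psi)=\varnothing$. Action model $\mathcal{U}_\varphi=\langle E^\varphi,Q^\varphi,\mathsf{pre}^\varphi\rangle$ for DBI normal $\varphi$, recursively; always $E^\varphi=\{0,-1\}\sqcup D^\varphi$, $\varnothing\ne D^\varphi\subseteq\{1,2,\dots\}$, $\mathsf{pre}^\varphi(0)=\mathsf{pre}^\varphi(-1)=\top$; $\underline{Q}_j:=Q_j\cap((E\setminus\{0\})\times(E\setminus\{0\}))$. (1) $\varphi=B_i\xi$: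 $D=\{m\}$, $\mathsf{pre}(m)=\xi$, $Q_j=\{(0,-1),(m,-1),(-1,-1)\}$ ($j\ne i$), $Q_i=\{(0,m),(m,m),(-1,-1)\}$. (2) $\varphi=B_i\psi$: fresh $m\ge1$, $m\notin D^\psi$; $D^\varphi=D^\psi\sqcup\{m\}$; $\mathsf{pre}^\varphi$ extends $\mathsf{pre}^\psi$ with $\mathsf{pre}^\varphi(m)=\top$; $Q^\varphi_j=\underline{Q}^\psi_j\cup\{(0,-1)\}\cup\{(m,k)\mid(0,k)\in Q^\psi_j\}$ ($j\ne i$); $Q^\varphi_i=\underline{Q}^\psi_i\cup\{(0,m),(m,m)\}$. (3) $\varphi=B_i(\xi\wedge\psi)$: as (2) but $\mathsf{pre}^\varphi(m)=\xi$. (4) $\varphi=\psi\wedge\theta$: with $D^\psi\cap D^\theta=\varnothing$, $D^\varphi=D^\psi\sqcup D^\theta$, $\mathsf{pre}^\varphi=\mathsf{pre}^\psi\cup\mathsf{pre}^\theta$, $Q^\varphi_j=\underline{Q}^\psi_j\cup\underline{Q}^\theta_j\cup\{(0,k)\mid(0,k)\in Q^\psi_j\cup Q^\theta_j, k\in D^\psi\sqcup D^\theta\}\cup\{(0,-1)\mid\text{no such }k\text{ exists}\}$. *)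

theory Defs
  imports Main
begin

datatype ('ag, 'p) fm =
    Prop 'p
  | Neg "('ag, 'p) fm"
  | Conj "('ag, 'p) fm" "('ag, 'p) fm"
  | B 'ag "('ag, 'p) fm"

definition TT :: "('ag, 'p) fm" where
  "TT = Neg (Conj (Prop undefined) (Neg (Prop undefined)))"

fun propositional :: "('ag, 'p) fm \<Rightarrow> bool" where
  "propositional (Prop p) = True"
| "propositional (Neg f) = propositional f"
| "propositional (Conj f g) = (propositional f \<and> propositional g)"
| "propositional (B i f) = False"

fun ta :: "('ag, 'p) fm \<Rightarrow> 'ag set" where
  "ta (Prop p) = {}"
| "ta (Neg f) = ta f"
| "ta (Conj f g) = ta f \<union> ta g"
| "ta (B i f) = {i}"

inductive dbi :: "('ag, 'p) fm \<Rightarrow> bool" where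
  dbi_B_prop: "propositional \<xi> \<Longrightarrow> dbi (B i \<xi>)"
| dbi_B_conj: "propositional \<xi> \<Longrightarrow> dbi \<phi> \<Longrightarrow> dbi (B i (Conj \<xi> \<phi>))"
| dbi_conj: "dbi \<phi> \<Longrightarrow> dbi \<psi> \<Longrightarrow> dbi (Conj \<phi> \<psi>)"
| dbi_B: "dbi \<phi> \<Longrightarrow> dbi (B i \<phi>)"

inductive dbi_normal :: "('ag, 'p) fm \<Rightarrow> bool" where
  dn_B_prop: "propositional \<xi> \<Longrightarrow> dbi_normal (B i \<xi>)"
| dn_B: "dbi_normal \<phi> \<Longrightarrow> i \<notin> ta \<phi> \<Longrightarrow> dbi_normal (B i \<phi>)"
| dn_B_conj: "propositional \<xi> \<Longrightarrow> dbi_normal \<phi> \<Longrightarrow> i \<notin> ta \<phi>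
               \<Longrightarrow> dbi_normal (B i (Conj \<xi> \<phi>))"
| dn_conj: "dbi_normal \<phi> \<Longrightarrow> dbi_normal \<psi> \<Longrightarrow> ta \<phi> \<inter> ta \<psi> = {}
               \<Longrightarrow> dbi_normal (Conj \<phi> \<psi>)"

record ('w, 'ag, 'p) kripke =
  worlds :: "'w set"
  rel :: "'ag \<Rightarrow> ('w \<times> 'w) set"
  val :: "'p \<Rightarrow> 'w set"

definition kripke_wf :: "('w, 'ag, 'p) kripke \<Rightarrow> bool" where
  "kripke_wf M \<longleftrightarrow> worlds M \<noteq> {} \<and> (\<forall>i. rel M i \<subseteq> worlds M \<times> worlds M)
                  \<and> (\<forall>p. val M p \<subseteq> worlds M)"

fun sat :: "('w, 'ag, 'p) kripke \<Rightarrow> 'w \<Rightarrow> ('ag, 'p) fm \<Rightarrow> bool" where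
  "sat M w (Prop p) = (w \<in> val M p)"
| "sat M w (Neg f) = (\<not> sat M w f)"
| "sat M w (Conj f g) = (sat M w f \<and> sat M w g)"
| "sat M w (B i f) = (\<forall>u. (w, u) \<in> rel M i \<longrightarrow> sat M u f)"

record ('ag, 'p) amodel =
  events :: "int set"
  arel :: "'ag \<Rightarrow> (int \<times> int) set"
  pre :: "int \<Rightarrow> ('ag, 'p) fm"

definition upd_defined :: "('w, 'ag, 'p) kripke \<Rightarrow> 'w \<Rightarrow> ('ag, 'p) amodel \<Rightarrow> int \<Rightarrow> bool" where
  "upd_defined M w U \<alpha> \<longleftrightarrow> w \<in> worlds M \<and> \<alpha> \<in> events U \<and> sat M w (pre U \<alpha>)"

definition upd_T :: "('w, 'ag, 'p) kripke \<Rightarrow> ('ag, 'p) amodel \<Rightarrow> ('w \<times> int) set" where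
  "upd_T M U = {(x, \<beta>). x \<in> worlds M \<and> \<beta> \<in> events U \<and> sat M x (pre U \<beta>)}"

inductive_set upd_worlds :: "('w, 'ag, 'p) kripke \<Rightarrow> 'w \<Rightarrow> ('ag, 'p) amodel \<Rightarrow> int \<Rightarrow> ('w \<times> int) set"
  for M w U \<alpha> where
  base: "(w, \<alpha>) \<in> upd_T M U \<Longrightarrow> (w, \<alpha>) \<in> upd_worlds M w U \<alpha>"
| step: "(x, \<beta>) \<in> upd_worlds M w U \<alpha> \<Longrightarrow> (u, \<gamma>) \<in> upd_T M U \<Longrightarrow> (x, u) \<in> rel M i
         \<Longrightarrow> (\<beta>, \<gamma>) \<in> arel U i \<Longrightarrow> (u, \<gamma>) \<in> upd_worlds M w U \<alpha>"

definition upd :: "('w, 'ag, 'p) kripke \<Rightarrow> 'w \<Rightarrow> ('ag, 'p) amodel \<Rightarrow> int \<Rightarrow> ('w \<times> int, 'ag, 'p) kripke" where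
  "upd M w U \<alpha> =
     \<lparr> worlds = upd_worlds M w U \<alpha>,
       rel = (\<lambda>i. {((x, \<beta>), (u, \<gamma>)). (x, \<beta>) \<in> upd_worlds M w U \<alpha> \<and> (u, \<gamma>) \<in> upd_worlds M w U \<alpha>
                       \<and> (x, u) \<in> rel M i \<and> (\<beta>, \<gamma>) \<in> arel U i}),
       val = (\<lambda>p. {(x, \<beta>). (x, \<beta>) \<in> upd_worlds M w U \<alpha> \<and> x \<in> val M p}) \<rparr>"

definition iso_pointed :: "('a, 'ag, 'p) kripke \<Rightarrow> 'a \<Rightarrow> ('b, 'ag, 'p) kripke \<Rightarrow> 'b \<Rightarrow> bool" where
  "iso_pointed M1 w1 M2 w2 \<longleftrightarrow>
     (\<exists>f. bij_betw f (worlds M1) (worlds M2) \<and> f w1 = w2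
        \<and> (\<forall>i. \<forall>x\<in>worlds M1. \<forall>y\<in>worlds M1. (x, y) \<in> rel M1 i \<longleftrightarrow> (f x, f y) \<in> rel M2 i)
        \<and> (\<forall>p. \<forall>x\<in>worlds M1. x \<in> val M1 p \<longleftrightarrow> f x \<in> val M2 p))"

definition dset :: "('ag, 'p) amodel \<Rightarrow> int set" where
  "dset U = events U - {0, -1}"

definition uQ :: "('ag, 'p) amodel \<Rightarrow> 'ag \<Rightarrow> (int \<times> int) set" where
  "uQ U j = arel U j \<inter> ((events U - {0}) \<times> (events U - {0}))"

text \<open>\<open>U_of \<phi> U\<close>: U is (one admissible choice of fresh event names for) the action model
  \<open>U_\<phi>\<close> built by clauses (1)--(4).\<close>
inductive U_of :: "('ag, 'p) fm \<Rightarrow> ('ag, 'p) amodel \<Rightarrow> bool" where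
  U_B_prop: "propositional \<xi> \<Longrightarrow> m \<ge> 1 \<Longrightarrow>
    U_of (B i \<xi>)
      \<lparr> events = {0, -1, m},
        arel = (\<lambda>j. if j = i then {(0, m), (m, m), (-1, -1)} else {(0, -1), (m, -1), (-1, -1)}),
        pre = (\<lambda>e. if e = m then \<xi> else TT) \<rparr>"
| U_B: "U_of \<psi> U \<Longrightarrow> m \<ge> 1 \<Longrightarrow> m \<notin> dset U \<Longrightarrow>
    U_of (B i \<psi>)
      \<lparr> events = events U \<union> {m},
        arel = (\<lambda>j. if j = i then uQ U i \<union> {(0, m), (m, m)}
                    else uQ U j \<union> {(0, -1)} \<union> {(m, k) | k. (0, k) \<in> arel U j}),
        pre = (pre U)(m := TT) \<rparr>"
| U_B_conj: "propositional \<xi> \<Longrightarrow> U_of \<psi> U \<Longrightarrow> m \<ge> 1 \<Longrightarrow> m \<notin> dset U \<Longrightarrow>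
    U_of (B i (Conj \<xi> \<psi>))
      \<lparr> events = events U \<union> {m},
        arel = (\<lambda>j. if j = i then uQ U i \<union> {(0, m), (m, m)}
                    else uQ U j \<union> {(0, -1)} \<union> {(m, k) | k. (0, k) \<in> arel U j}),
        pre = (pre U)(m := \<xi>) \<rparr>"
| U_conj: "U_of \<psi> U1 \<Longrightarrow> U_of \<theta> U2 \<Longrightarrow> dset U1 \<inter> dset U2 = {} \<Longrightarrow>
    U_of (Conj \<psi> \<theta>)
      \<lparr> events = {0, -1} \<union> dset U1 \<union> dset U2,
        arel = (\<lambda>j. uQ U1 j \<union> uQ U2 j
                    \<union> {(0, k) | k. (0, k) \<in> arel U1 j \<union> arel U2 j \<and> k \<in> dset U1 \<union> dset U2}
                    \<union> (if \<exists>k. (0, k) \<in> arel U1 j \<union> arel U2 j \<and> k \<in> dset U1 \<union> dset U2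
                       then {} else {(0, -1)})),
        pre = (\<lambda>e. if e \<in> dset U1 then pre U1 e else if e \<in> dset U2 then pre U2 e else TT) \<rparr>"

end

theory Submission
  imports Defs
begin

text \<open>Every event of \<open>U_\<phi>\<close> has at most one \<open>Q_j\<close>-successor for each agent \<open>j\<close>: in clause (4)
  the \<open>0\<close>-successors inherited from the two conjuncts belong to the disjoint agent sets
  \<open>ta \<psi>\<close> and \<open>ta \<theta>\<close>, which is where DBI normality enters. All preconditions are
  propositional, so they hold at \<open>(x, \<beta>)\<close> in \<open>M \<odot> U\<close> iff they hold at \<open>x\<close> in \<open>M\<close>.
  Hence every world \<open>((x, \<beta>), \<gamma>)\<close> of the double update reachable from \<open>((w, 0), 0)\<close> has
  \<open>\<gamma> = \<beta>\<close>, and \<open>(x, \<beta>) \<mapsto> ((x, \<beta>), \<beta>)\<close> is the required isomorphism.\<close>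

lemma sat_TT [simp]: "sat M x TT"
  by (simp add: TT_def)

lemma propositional_TT [simp]: "propositional TT"
  by (simp add: TT_def)

lemma sat_upd_propositional:
  assumes "propositional f" and "(x, \<beta>) \<in> upd_worlds M w U \<alpha>"
  shows "sat (upd M w U \<alpha>) (x, \<beta>) f = sat M x f"
  using assms by (induction f) (auto simp: upd_def)

lemma worlds_upd: "worlds (upd M w U \<alpha>) = upd_worlds M w U \<alpha>"
  by (simp add: upd_def)

lemma upd_defined_upd:
  assumes "propositional (pre U \<alpha>)" and "upd_defined M w U \<alpha>"
  shows "upd_defined (upd M w U \<alpha>) (w, \<alpha>) U \<alpha>"
proof -
  have "(w, \<alpha>) \<in> upd_worlds M w U \<alpha>"
    using assms(2) by (auto intro: upd_worlds.base simp: upd_defined_def upd_T_def)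
  with assms show ?thesis
    by (simp add: upd_defined_def worlds_upd sat_upd_propositional)
qed

lemma upd_worlds_updD:
  assumes "\<forall>j. single_valued (arel U j)"
    and "(p, \<gamma>) \<in> upd_worlds (upd M w U \<alpha>) (w, \<alpha>) U \<alpha>"
  shows "snd p = \<gamma> \<and> p \<in> upd_worlds M w U \<alpha>"
  using assms(2)
proof (induction rule: upd_worlds.induct)
  case base
  then show ?case by (simp add: upd_T_def worlds_upd)
next
  case (step p \<beta> q \<gamma> i)
  have "q \<in> upd_worlds M w U \<alpha> \<and> (snd p, snd q) \<in> arel U i"
    using \<open>(p, q) \<in> rel (upd M w U \<alpha>) i\<close> by (cases p, cases q) (simp add: upd_def)
  then show ?case
    using step.IH \<open>(\<beta>, \<gamma>) \<in> arel U i\<close> assms(1) by (metis single_valuedD)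
qed

lemma upd_worlds_updI:
  assumes "\<forall>e. propositional (pre U e)"
    and "(x, \<beta>) \<in> upd_worlds M w U \<alpha>"
  shows "((x, \<beta>), \<beta>) \<in> upd_worlds (upd M w U \<alpha>) (w, \<alpha>) U \<alpha>"
  using assms(2)
proof (induction rule: upd_worlds.induct)
  case base
  then have "(w, \<alpha>) \<in> upd_worlds M w U \<alpha>"
    by (rule upd_worlds.base)
  with base show ?case
    by (auto intro!: upd_worlds.base simp: upd_T_def worlds_upd sat_upd_propositional assms(1))
next
  case (step x \<beta> u \<gamma> i)
  have u: "(u, \<gamma>) \<in> upd_worlds M w U \<alpha>"
    using step.hyps by (rule upd_worlds.step)
  with step.hyps have "((u, \<gamma>), \<gamma>) \<in> upd_T (upd M w U \<alpha>) U"
    by (auto simp: upd_T_def worlds_upd sat_upd_propositional assms(1))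
  moreover have "((x, \<beta>), (u, \<gamma>)) \<in> rel (upd M w U \<alpha>) i"
    using step.hyps u by (simp add: upd_def)
  ultimately show ?case
    using upd_worlds.step[OF step.IH] step.hyps by blast
qed

lemma worlds_upd_upd:
  assumes "\<forall>j. single_valued (arel U j)" and "\<forall>e. propositional (pre U e)"
  shows "worlds (upd (upd M w U \<alpha>) (w, \<alpha>) U \<alpha>) = (\<lambda>(x, \<beta>). ((x, \<beta>), \<beta>)) ` worlds (upd M w U \<alpha>)"
proof (intro equalityI subsetI)
  fix y
  assume "y \<in> worlds (upd (upd M w U \<alpha>) (w, \<alpha>) U \<alpha>)"
  then obtain p \<gamma> where y: "y = (p, \<gamma>)" "(p, \<gamma>) \<in> upd_worlds (upd M w U \<alpha>) (w, \<alpha>) U \<alpha>"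
    by (metis prod.collapse worlds_upd)
  then have "\<gamma> = snd p" "p \<in> worlds (upd M w U \<alpha>)"
    using upd_worlds_updD[OF assms(1) y(2)] by (auto simp: worlds_upd)
  then show "y \<in> (\<lambda>(x, \<beta>). ((x, \<beta>), \<beta>)) ` worlds (upd M w U \<alpha>)"
    using y by (cases p) auto
next
  fix y
  assume "y \<in> (\<lambda>(x, \<beta>). ((x, \<beta>), \<beta>)) ` worlds (upd M w U \<alpha>)"
  then show "y \<in> worlds (upd (upd M w U \<alpha>) (w, \<alpha>) U \<alpha>)"
    using upd_worlds_updI[OF assms(2)] by (auto simp: worlds_upd)
qed

lemma iso_pointed_upd_upd:
  assumes "\<forall>j. single_valued (arel U j)" and "\<forall>e. propositional (pre U e)"
  shows "iso_pointed (upd M w U \<alpha>) (w, \<alpha>) (upd (upd M w U \<alpha>) (w, \<alpha>) U \<alpha>) ((w, \<alpha>), \<alpha>)"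
proof -
  let ?N = "upd M w U \<alpha>"
  let ?N2 = "upd ?N (w, \<alpha>) U \<alpha>"
  let ?f = "\<lambda>(x, \<beta>). ((x, \<beta>), \<beta>)"
  have worlds: "worlds ?N2 = ?f ` worlds ?N"
    using assms by (rule worlds_upd_upd)
  have "inj_on ?f (worlds ?N)"
    by (auto simp: inj_on_def)
  then have bij: "bij_betw ?f (worlds ?N) (worlds ?N2)"
    by (simp add: worlds bij_betw_def)
  have "(p, q) \<in> rel ?N i \<longleftrightarrow> (?f p, ?f q) \<in> rel ?N2 i"
    if "p \<in> worlds ?N" "q \<in> worlds ?N" for i p q
  proof -
    have "?f p \<in> worlds ?N2" "?f q \<in> worlds ?N2"
      using that by (simp_all add: worlds)
    with that show ?thesis
      by (cases p, cases q) (simp add: upd_def)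
  qed
  moreover have "p \<in> val ?N v \<longleftrightarrow> ?f p \<in> val ?N2 v" if "p \<in> worlds ?N" for v p
  proof -
    have "?f p \<in> worlds ?N2"
      using that by (simp add: worlds)
    with that show ?thesis
      by (cases p) (simp add: upd_def)
  qed
  ultimately show ?thesis
    unfolding iso_pointed_def using bij by (intro exI[of _ ?f]) auto
qed

lemma dbi_normal_not_propositional: "dbi_normal \<phi> \<Longrightarrow> \<not> propositional \<phi>"
  by (induction rule: dbi_normal.induct) auto

lemma U_of_not_propositional: "U_of \<phi> U \<Longrightarrow> \<not> propositional \<phi>"
  by (induction rule: U_of.induct) auto

lemma dbi_normal_B_body:
  assumes "dbi_normal (B i \<psi>)" and "U_of \<psi> U"
  shows "dbi_normal \<psi>"
  using assms by (cases rule: dbi_normal.cases) (auto elim: U_of.cases simp: U_of_not_propositional)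

lemma dbi_normal_B_Conj_body:
  assumes "dbi_normal (B i (Conj \<xi> \<psi>))" and "propositional \<xi>" and "U_of \<psi> U"
  shows "dbi_normal \<psi>"
  using assms
  by (cases rule: dbi_normal.cases)
    (auto elim: dbi_normal.cases simp: U_of_not_propositional dbi_normal_not_propositional)

lemma U_of_zero_event: "U_of \<phi> U \<Longrightarrow> 0 \<in> events U \<and> pre U 0 = TT"
  by (induction rule: U_of.induct) (auto simp: dset_def)

lemma U_of_pre_propositional: "U_of \<phi> U \<Longrightarrow> propositional (pre U e)"
  by (induction rule: U_of.induct) auto

lemma U_of_arel_minus_one: "U_of \<phi> U \<Longrightarrow> (-1, k) \<in> arel U j \<Longrightarrow> k = -1"
  by (induction rule: U_of.induct) (auto simp: uQ_def dset_def split: if_splits)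

lemma U_of_arel_zero: "U_of \<phi> U \<Longrightarrow> (0, k) \<in> arel U j \<Longrightarrow> k = -1 \<or> j \<in> ta \<phi>"
  by (induction rule: U_of.induct) (auto simp: uQ_def dset_def split: if_splits)

lemma U_of_single_valued:
  "U_of \<phi> U \<Longrightarrow> dbi_normal \<phi> \<Longrightarrow> single_valued (arel U j)"
proof (induction arbitrary: j rule: U_of.induct)
  case (U_B_prop \<xi> m i)
  then show ?case by (auto simp: single_valued_def)
next
  case (U_B \<psi> U m i)
  have "single_valued (arel U j')" for j'
    using U_B.IH U_B.prems U_B.hyps(1) by (blast intro: dbi_normal_B_body)
  moreover have "m \<notin> events U"
    using U_B.hyps by (auto simp: dset_def)
  ultimately show ?case
    using U_B.hyps(2) by (auto simp: single_valued_def uQ_def)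
next
  case (U_B_conj \<xi> \<psi> U m i)
  have "single_valued (arel U j')" for j'
    using U_B_conj.IH U_B_conj.prems U_B_conj.hyps(1,2) by (blast intro: dbi_normal_B_Conj_body)
  moreover have "m \<notin> events U"
    using U_B_conj.hyps by (auto simp: dset_def)
  ultimately show ?case
    using U_B_conj.hyps(3) by (auto simp: single_valued_def uQ_def)
next
  case (U_conj \<psi> U1 \<theta> U2)
  from U_conj.prems have "dbi_normal \<psi>" "dbi_normal \<theta>" and ta_disjoint: "ta \<psi> \<inter> ta \<theta> = {}"
    by (auto elim: dbi_normal.cases)
  then have sv1: "single_valued (arel U1 j)" and sv2: "single_valued (arel U2 j)"
    using U_conj.IH by blast+
  have zero: "k = k'"
    if "(0, k) \<in> arel U1 j \<union> arel U2 j" "(0, k') \<in> arel U1 j \<union> arel U2 j"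
      and "k \<in> dset U1 \<union> dset U2" "k' \<in> dset U1 \<union> dset U2" for k k'
  proof -
    have "-1 \<notin> dset U1 \<union> dset U2"
      by (simp add: dset_def)
    then show ?thesis
      using that sv1 sv2 ta_disjoint U_of_arel_zero[OF U_conj.hyps(1)] U_of_arel_zero[OF U_conj.hyps(2)]
      by (blast dest: single_valuedD)
  qed
  have minus_one: "k = -1" if "(-1, k) \<in> arel U1 j \<union> arel U2 j" for k
    using that U_of_arel_minus_one[OF U_conj.hyps(1)] U_of_arel_minus_one[OF U_conj.hyps(2)] by blast
  show ?case (is "single_valued (arel ?U j)")
  proof (rule single_valuedI)
    fix e a b
    assume a: "(e, a) \<in> arel ?U j" and b: "(e, b) \<in> arel ?U j"
    consider "e = 0" | "e = -1" | "e \<in> dset U1" | "e \<in> dset U2"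
      using a by (auto simp: uQ_def dset_def split: if_splits)
    then show "a = b"
    proof cases
      case 1
      with a b zero show ?thesis by (auto simp: uQ_def split: if_splits)
    next
      case 2
      with a b minus_one show ?thesis by (auto simp: uQ_def split: if_splits)
    next
      case 3
      with a b sv1 U_conj.hyps(3) show ?thesis
        by (auto simp: uQ_def dset_def split: if_splits dest: single_valuedD)
    next
      case 4
      with a b sv2 U_conj.hyps(3) show ?thesis
        by (auto simp: uQ_def dset_def split: if_splits dest: single_valuedD)
    qed
  qed
qed

lemma U_of_exists_above:
  "dbi_normal \<phi> \<Longrightarrow> 1 \<le> n \<Longrightarrow> \<exists>U. U_of \<phi> U \<and> finite (dset U) \<and> dset U \<subseteq> {n..}"
proof (induction \<phi> arbitrary: n rule: dbi_normal.induct)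
  case (dn_B_prop \<xi> i)
  show ?case
    by (rule exI, rule conjI, rule U_of.U_B_prop[OF dn_B_prop.hyps dn_B_prop.prems])
      (auto simp: dset_def)
next
  case (dn_B \<phi> i)
  obtain U where U: "U_of \<phi> U" "finite (dset U)" "dset U \<subseteq> {n + 1..}"
    using dn_B.IH[of "n + 1"] dn_B.prems by auto
  then have fresh: "n \<notin> dset U"
    by auto
  show ?case
    by (rule exI, rule conjI, rule U_of.U_B[OF U(1) dn_B.prems fresh])
      (use U dn_B.prems in \<open>auto simp: dset_def\<close>)
next
  case (dn_B_conj \<xi> \<phi> i)
  obtain U where U: "U_of \<phi> U" "finite (dset U)" "dset U \<subseteq> {n + 1..}"
    using dn_B_conj.IH[of "n + 1"] dn_B_conj.prems by auto
  then have fresh: "n \<notin> dset U"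
    by auto
  show ?case
    by (rule exI, rule conjI, rule U_of.U_B_conj[OF dn_B_conj.hyps(1) U(1) dn_B_conj.prems fresh])
      (use U dn_B_conj.prems in \<open>auto simp: dset_def\<close>)
next
  case (dn_conj \<phi> \<psi>)
  obtain U1 where U1: "U_of \<phi> U1" "finite (dset U1)" "dset U1 \<subseteq> {n..}"
    using dn_conj.IH(1) dn_conj.prems by blast
  define n2 where "n2 = Max (insert n (dset U1)) + 1"
  have n2: "n < n2" "\<forall>e\<in>dset U1. e < n2"
    using U1(2) by (auto simp: n2_def Max_ge_iff)
  obtain U2 where U2: "U_of \<psi> U2" "finite (dset U2)" "dset U2 \<subseteq> {n2..}"
    using dn_conj.IH(2)[of n2] n2(1) dn_conj.prems by auto
  have disjoint: "dset U1 \<inter> dset U2 = {}"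
    using n2(2) U2(3) by force
  show ?case
    by (rule exI, rule conjI, rule U_of.U_conj[OF U1(1) U2(1) disjoint])
      (use U1 U2 n2(1) in \<open>auto simp: dset_def\<close>)
qed

lemma upd_U_of_idempotent:
  assumes "U_of \<phi> U" and "dbi_normal \<phi>" and "w \<in> worlds M"
  shows "upd_defined M w U 0
    \<and> upd_defined (upd M w U 0) (w, 0) U 0
    \<and> iso_pointed (upd M w U 0) (w, 0) (upd (upd M w U 0) (w, 0) U 0) ((w, 0), 0)"
proof -
  have defined: "upd_defined M w U 0"
    using U_of_zero_event[OF assms(1)] assms(3) by (simp add: upd_defined_def)
  have "\<forall>j. single_valued (arel U j)"
    using U_of_single_valued[OF assms(1,2)] by blast
  moreover have "\<forall>e. propositional (pre U e)"
    using U_of_pre_propositional[OF assms(1)] by blast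
  ultimately show ?thesis
    using defined upd_defined_upd[OF U_of_pre_propositional[OF assms(1)] defined]
      iso_pointed_upd_upd[of U M w 0] by blast
qed

theorem theorem7:
  fixes \<phi> :: "('ag :: finite, 'p) fm"
  assumes "card (UNIV :: 'ag set) > 1"
    and "dbi_normal \<phi>"
  shows "(\<exists>U. U_of \<phi> U) \<and>
         (\<forall>U. U_of \<phi> U \<longrightarrow>
            (\<forall>(M :: ('w, 'ag, 'p) kripke) w. kripke_wf M \<and> w \<in> worlds M \<longrightarrow>
               upd_defined M w U 0
             \<and> upd_defined (upd M w U 0) (w, 0) U 0
             \<and> iso_pointed (upd M w U 0) (w, 0) (upd (upd M w U 0) (w, 0) U 0) ((w, 0), 0)))"
  using U_of_exists_above[OF assms(2) order_refl] upd_U_of_idempotent[OF _ assms(2)] by meson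

end
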